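(* Let $s\in(0,1)$, $d\ge1$ and let $B:=B_{\rho_0}(y_0)\subset\mathbb{R}^{1+d}$ be a half-parabolic ball. Let $S$ and $D$ be non-negative, monotone (with respect to inclusion) functions defined on the convex subsets of $B$. Assume that for every $n\in\mathbb{N}$ there is $C(n)>0$ such that for all half-parabolic balls $B_0,B_1,\dots,B_n\subset B$ with $B_0\subset\bigcup_{i=1}^nB_i$, $$S(B_0)\le C(n)\Big(\sum_{i=1}^nS(B_i)+D(B)\Big).$$ Then for any $\theta_0\in(0,1/2]$ and $\gamma>0$ there exists $\varepsilon=\varepsilon(\theta_0,\gamma,s,d,\rho_0)\in(0,1)$ such that, if for some $E\ge0$ $$\sigma^\gamma S(B_{\theta_0\sigma}(y))\le\varepsilon\,\sigma^\gamma S(B_\sigma(y))+E\quad\text{for all }B_\sigma(y)\subset B,$$ then for each $\theta\in(0,1)$ there is $C=C(d,\theta_0,\theta,\gamma,s,\rho_0)>0$ with $$\sigma^\gamma S(B_{\theta\sigma}(y))\le C\,(E+D(B))\quad\text{for all }B_\sigma(y)\subset B.$$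
   Context: Points of $\mathbb{R}^{1+d}$ are $x=(x_0,x_{1:d})$. For $r>0$ the half-parabolic ball is $B_r(x):=(x_0-r^{2s},x_0]\times B_r(x_{1:d})$, where $B_r(x_{1:d})$ is the open Euclidean ball in $\mathbb{R}^d$. *)

theory Defs
  imports "HOL-Analysis.Analysis"
begin

text \<open>Points of R^(1+d) are pairs (x0, x') with x0 real and x' in real^'n, d = CARD('n) >= 1.
  Half-parabolic ball: B_r(x) = (x0 - r^(2s), x0] x B_r(x').\<close>

definition hpball :: "real \<Rightarrow> real \<Rightarrow> real \<times> (real ^ 'n) \<Rightarrow> (real \<times> (real ^ 'n)) set" where
  "hpball s r x = {z. fst x - r powr (2 * s) < fst z \<and> fst z \<le> fst x \<and> snd z \<in> ball (snd x) r}"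

definition nonneg_mono_on_convex ::
  "(real \<times> (real ^ 'n)) set \<Rightarrow> ((real \<times> (real ^ 'n)) set \<Rightarrow> real) \<Rightarrow> bool" where
  "nonneg_mono_on_convex B F \<longleftrightarrow>
     (\<forall>A. convex A \<and> A \<subseteq> B \<longrightarrow> 0 \<le> F A) \<and>
     (\<forall>A A'. convex A \<and> convex A' \<and> A \<subseteq> A' \<and> A' \<subseteq> B \<longrightarrow> F A \<le> F A')"

end

theory Submission
  imports Defs
begin

(* Let M be the supremum of sigma^gamma S(B_(theta0 sigma/2)(y)) over all balls B_sigma(y) in B;
  it is finite because S is monotone. Parabolic scaling shows that every B_(sigma/2)(y) is covered
  by N balls B_(theta0 c sigma/2)(y_q) with B_(c sigma)(y_q) inside B_sigma(y), where N and c depend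
  only on s, theta0 and d. The decay hypothesis at radius sigma/2 followed by the covering
  inequality gives M <= eps C(N) N c^(-gamma) M + 2^gamma E + C(N) rho0^gamma D(B), so for eps small
  the first term is absorbed and M <= const (E + D(B)). A second covering of B_(theta sigma)(y) by
  balls of the same kind transfers this bound to every theta < 1. *)

lemma hpball_Times: "hpball s r x = {fst x - r powr (2 * s)<..fst x} \<times> ball (snd x) r"
  by (auto simp: hpball_def)

lemma convex_hpball: "convex (hpball s r x)"
  unfolding hpball_Times by (intro convex_Times convex_ball) (simp add: convex_real_interval)

lemma hpball_subset_iff:
  assumes "0 < r"
  shows "hpball s r x \<subseteq> hpball s \<rho> y \<longleftrightarrow>
    fst y - \<rho> powr (2 * s) \<le> fst x - r powr (2 * s) \<and> fst x \<le> fst y \<and> dist (snd x) (snd y) + r \<le> \<rho>"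
  using assms by (auto simp: hpball_Times times_subset_iff Ioc_subset_iff ball_subset_ball_iff)

lemma hpball_mono:
  assumes "0 \<le> s" "0 < r" "r \<le> r'"
  shows "hpball s r x \<subseteq> hpball s r' x"
  using assms powr_mono2[of "2 * s" r r'] by (auto simp: hpball_subset_iff)

lemma hpball_radius_le:
  assumes "0 < \<sigma>" "hpball s \<sigma> y \<subseteq> hpball s \<rho> x"
  shows "\<sigma> \<le> \<rho>"
  using assms zero_le_dist[of "snd y" "snd x"] unfolding hpball_subset_iff[OF assms(1)] by linarith

definition hp_scale :: "real \<Rightarrow> real \<times> (real ^ 'n) \<Rightarrow> real \<Rightarrow> real \<times> (real ^ 'n) \<Rightarrow> real \<times> (real ^ 'n)" where
  "hp_scale s y \<sigma> q = (fst y + \<sigma> powr (2 * s) * fst q, snd y + \<sigma> *\<^sub>R snd q)"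

lemma hp_scale_zero [simp]: "hp_scale s y \<sigma> 0 = y"
  by (simp add: hp_scale_def)

lemma surj_hp_scale:
  assumes "0 < \<sigma>"
  shows "surj (hp_scale s y \<sigma>)"
proof (rule surjI)
  fix z
  show "hp_scale s y \<sigma> ((fst z - fst y) / \<sigma> powr (2 * s), (1 / \<sigma>) *\<^sub>R (snd z - snd y)) = z"
    using assms by (simp add: hp_scale_def)
qed

lemma hpball_hp_scale:
  assumes "0 < \<sigma>" "0 \<le> r"
  shows "hpball s (r * \<sigma>) (hp_scale s y \<sigma> q) = hp_scale s y \<sigma> ` hpball s r q"
proof -
  have "hp_scale s y \<sigma> w \<in> hpball s (r * \<sigma>) (hp_scale s y \<sigma> q) \<longleftrightarrow> w \<in> hpball s r q" for w
  proof -
    have "\<sigma> powr (2 * s) * fst q - (r * \<sigma>) powr (2 * s) < \<sigma> powr (2 * s) * fst w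
        \<longleftrightarrow> fst q - r powr (2 * s) < fst w"
      using assms mult_less_cancel_left_pos[of "\<sigma> powr (2 * s)" "fst q - r powr (2 * s)" "fst w"]
      by (simp add: powr_mult algebra_simps)
    moreover have "dist (snd y + \<sigma> *\<^sub>R snd q) (snd y + \<sigma> *\<^sub>R snd w) = \<sigma> * dist (snd q) (snd w)"
      using assms by (simp add: dist_norm flip: scaleR_diff_right)
    ultimately show ?thesis
      using assms by (simp add: hpball_def hp_scale_def)
  qed
  then have "hp_scale s y \<sigma> -` hpball s (r * \<sigma>) (hp_scale s y \<sigma> q) = hpball s r q"
    by blast
  then show ?thesis
    using surj_image_vimage_eq[OF surj_hp_scale[OF assms(1)]] by metis
qed

definition cover_pattern :: "real \<Rightarrow> real \<Rightarrow> real \<Rightarrow> real \<Rightarrow> (real \<times> (real ^ 'n)) set \<Rightarrow> bool" where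
  "cover_pattern s a \<kappa> c P \<longleftrightarrow> 0 < c \<and> finite P \<and> (\<forall>q\<in>P. hpball s c q \<subseteq> hpball s 1 0) \<and>
     hpball s a 0 \<subseteq> (\<Union>q\<in>P. hpball s (\<kappa> * c) q)"

lemma cover_pattern_rescale:
  assumes pattern: "cover_pattern s a \<kappa> c P" and "0 < \<sigma>" "0 \<le> a" "0 \<le> \<kappa>"
  shows "q \<in> P \<Longrightarrow> hpball s (c * \<sigma>) (hp_scale s y \<sigma> q) \<subseteq> hpball s \<sigma> y"
    and "hpball s (a * \<sigma>) y \<subseteq> (\<Union>q\<in>P. hpball s (\<kappa> * c * \<sigma>) (hp_scale s y \<sigma> q))"
proof -
  let ?f = "hp_scale s y \<sigma>"
  have c: "0 < c" using pattern by (simp add: cover_pattern_def)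
  have ball: "hpball s (r * \<sigma>) (?f q) = ?f ` hpball s r q" if "0 \<le> r" for r q
    using hpball_hp_scale[OF \<open>0 < \<sigma>\<close> that] .
  show "hpball s (c * \<sigma>) (?f q) \<subseteq> hpball s \<sigma> y" if "q \<in> P"
  proof -
    have "hpball s c q \<subseteq> hpball s 1 0" using pattern that by (simp add: cover_pattern_def)
    then have "?f ` hpball s c q \<subseteq> ?f ` hpball s 1 0" by (rule image_mono)
    then show ?thesis using ball[of c q] ball[of 1 0] c by simp
  qed
  have "?f ` hpball s a 0 \<subseteq> ?f ` (\<Union>q\<in>P. hpball s (\<kappa> * c) q)"
    using pattern by (intro image_mono) (simp add: cover_pattern_def)
  then show "hpball s (a * \<sigma>) y \<subseteq> (\<Union>q\<in>P. hpball s (\<kappa> * c * \<sigma>) (?f q))"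
    using ball[of a 0] ball[of "\<kappa> * c"] \<open>0 \<le> a\<close> \<open>0 \<le> \<kappa>\<close> c by (simp add: image_UN)
qed

lemma finite_grid_cover_Ioc:
  fixes T h :: real
  assumes "0 \<le> T" "0 < h"
  obtains G where "finite G" "G \<subseteq> {-T..0}" "\<And>u. -T < u \<Longrightarrow> u \<le> 0 \<Longrightarrow> \<exists>t\<in>G. t - h < u \<and> u \<le> t"
proof
  define J where "J = nat \<lfloor>T / h\<rfloor>"
  let ?G = "(\<lambda>j. - (real j * h)) ` {..J}"
  show "finite ?G" by simp
  have "real J \<le> T / h" unfolding J_def using assms by (simp add: of_nat_floor)
  then have "real j * h \<le> T" if "j \<le> J" for j
    using that assms by (simp add: field_simps) (meson mult_left_mono of_nat_le_iff order_trans less_imp_le)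
  then show "?G \<subseteq> {-T..0}" using assms by auto
  fix u assume u: "-T < u" "u \<le> 0"
  define j where "j = nat \<lfloor>- u / h\<rfloor>"
  have "real j \<le> - u / h" "- u / h < real j + 1"
    using u assms by (simp_all add: j_def divide_nonpos_pos)
  then have "- (real j * h) - h < u" "u \<le> - (real j * h)"
    using assms by (simp_all add: field_simps)
  moreover have "j \<le> J"
    using u assms unfolding j_def J_def by (intro nat_mono floor_mono divide_right_mono) auto
  ultimately show "\<exists>t\<in>?G. t - h < u \<and> u \<le> t" by auto
qed

lemma cover_pattern_exists:
  assumes "0 < s" "0 < a" "a < 1" "0 < \<kappa>"
  obtains c P where "cover_pattern s a \<kappa> (c :: real) (P :: (real \<times> (real ^ 'n)) set)"
proof -
  have a: "a powr (2 * s) < 1"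
    using assms powr_less_mono2[of "2 * s" a 1] by simp
  \<comment> \<open>small enough that B_c(q) lies in B_1(0) whenever q lies in [-a^(2s), 0] \<times> cball 0 a\<close>
  define c where "c = min (1 - a) ((1 - a powr (2 * s)) powr (1 / (2 * s)))"
  have c: "0 < c" "c \<le> 1 - a"
    using assms a by (simp_all add: c_def)
  have "c powr (2 * s) \<le> ((1 - a powr (2 * s)) powr (1 / (2 * s))) powr (2 * s)"
    using c assms by (intro powr_mono2) (auto simp: c_def)
  then have c_time: "c powr (2 * s) \<le> 1 - a powr (2 * s)"
    using assms a by (simp add: powr_powr less_imp_le)
  obtain T where T: "finite T" "T \<subseteq> {- (a powr (2 * s))..0}"
    "\<And>u. - (a powr (2 * s)) < u \<Longrightarrow> u \<le> 0 \<Longrightarrow> \<exists>t\<in>T. t - (\<kappa> * c) powr (2 * s) < u \<and> u \<le> t"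
    using finite_grid_cover_Ioc[of "a powr (2 * s)" "(\<kappa> * c) powr (2 * s)"] assms c by auto
  obtain F :: "(real ^ 'n) set" where F: "finite F" "F \<subseteq> cball 0 a" "cball 0 a \<subseteq> (\<Union>p\<in>F. ball p (\<kappa> * c))"
    using seq_compact_imp_totally_bounded[OF compact_imp_seq_compact[OF compact_cball[of 0 a]]] assms c
    by (metis mult_pos_pos)
  have "cover_pattern s a \<kappa> c (T \<times> F)"
    unfolding cover_pattern_def
  proof (intro conjI ballI)
    show "0 < c" "finite (T \<times> F)" using c T F by simp_all
    show "hpball s c q \<subseteq> hpball s 1 0" if "q \<in> T \<times> F" for q
    proof -
      have "- (a powr (2 * s)) \<le> fst q" "fst q \<le> 0" "norm (snd q) \<le> a"
        using that T(2) F(2) by auto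
      then show ?thesis
        using c c_time by (simp add: hpball_subset_iff)
    qed
    show "hpball s a 0 \<subseteq> (\<Union>q\<in>T \<times> F. hpball s (\<kappa> * c) q)"
    proof
      fix w :: "real \<times> (real ^ 'n)" assume "w \<in> hpball s a 0"
      then have "- (a powr (2 * s)) < fst w" "fst w \<le> 0" "snd w \<in> cball 0 a"
        by (simp_all add: hpball_def)
      then obtain t p where "t \<in> T" "t - (\<kappa> * c) powr (2 * s) < fst w" "fst w \<le> t"
        and "p \<in> F" "dist p (snd w) < \<kappa> * c"
        using T(3) F(3) by (meson UN_E mem_ball subsetD)
      then show "w \<in> (\<Union>q\<in>T \<times> F. hpball s (\<kappa> * c) q)"
        by (intro UN_I[of "(t, p)"]) (auto simp: hpball_def)
    qed
  qed
  then show ?thesis by (rule that)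
qed

locale hp_subadditive =
  fixes s \<rho>0 :: real and y0 :: "real \<times> (real ^ 'n)"
    and S D :: "(real \<times> (real ^ 'n)) set \<Rightarrow> real" and C :: "nat \<Rightarrow> real"
  assumes s_nonneg: "0 \<le> s" and \<rho>0_pos: "0 < \<rho>0"
    and S_nonneg_mono: "nonneg_mono_on_convex (hpball s \<rho>0 y0) S"
    and D_nonneg_mono: "nonneg_mono_on_convex (hpball s \<rho>0 y0) D"
    and C_nonneg: "0 \<le> C n"
    and S_cover: "(\<forall>i\<le>n. 0 < r i \<and> hpball s (r i) (c i) \<subseteq> hpball s \<rho>0 y0) \<Longrightarrow>
      hpball s (r 0) (c 0) \<subseteq> (\<Union>i\<in>{1..n}. hpball s (r i) (c i)) \<Longrightarrow>
      S (hpball s (r 0) (c 0)) \<le> C n * ((\<Sum>i=1..n. S (hpball s (r i) (c i))) + D (hpball s \<rho>0 y0))"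
begin

abbreviation "B \<equiv> hpball s \<rho>0 y0"

lemma S_nonneg: "hpball s r z \<subseteq> B \<Longrightarrow> 0 \<le> S (hpball s r z)"
  using S_nonneg_mono convex_hpball[of s r z] unfolding nonneg_mono_on_convex_def by blast

lemma S_mono: "hpball s r z \<subseteq> hpball s r' z' \<Longrightarrow> hpball s r' z' \<subseteq> B \<Longrightarrow> S (hpball s r z) \<le> S (hpball s r' z')"
  using S_nonneg_mono convex_hpball[of s r z] convex_hpball[of s r' z']
  unfolding nonneg_mono_on_convex_def by blast

lemma D_nonneg: "0 \<le> D B"
  using D_nonneg_mono convex_hpball[of s \<rho>0 y0] unfolding nonneg_mono_on_convex_def by blast

lemma S_le_cover_sum:
  assumes "finite P" "0 < r" "hpball s r z \<subseteq> B"
    and "\<And>q. q \<in> P \<Longrightarrow> 0 < rad q \<and> hpball s (rad q) (cen q) \<subseteq> B"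
    and cover: "hpball s r z \<subseteq> (\<Union>q\<in>P. hpball s (rad q) (cen q))"
  shows "S (hpball s r z) \<le> C (card P) * ((\<Sum>q\<in>P. S (hpball s (rad q) (cen q))) + D B)"
proof -
  obtain h where h: "bij_betw h {1..card P} P"
    using ex_bij_betw_nat_finite_1[OF \<open>finite P\<close>] by blast
  define c where "c i = (if i = 0 then z else cen (h i))" for i
  define r' where "r' i = (if i = 0 then r else rad (h i))" for i
  have hP: "h i \<in> P" if "i \<in> {1..card P}" for i
    using h that by (auto dest: bij_betw_apply)
  have "S (hpball s (r' 0) (c 0)) \<le> C (card P) * ((\<Sum>i=1..card P. S (hpball s (r' i) (c i))) + D B)"
  proof (rule S_cover)
    show "\<forall>i\<le>card P. 0 < r' i \<and> hpball s (r' i) (c i) \<subseteq> B"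
      using assms hP by (auto simp: c_def r'_def)
    have "(\<Union>i\<in>{1..card P}. hpball s (r' i) (c i)) = (\<Union>q\<in>h ` {1..card P}. hpball s (rad q) (cen q))"
      by (simp add: c_def r'_def)
    also have "h ` {1..card P} = P"
      using h by (simp add: bij_betw_def)
    finally show "hpball s (r' 0) (c 0) \<subseteq> (\<Union>i\<in>{1..card P}. hpball s (r' i) (c i))"
      using cover by (simp add: c_def r'_def)
  qed
  moreover have "(\<Sum>i=1..card P. S (hpball s (r' i) (c i))) = (\<Sum>q\<in>P. S (hpball s (rad q) (cen q)))"
    using sum.reindex_bij_betw[OF h, of "\<lambda>q. S (hpball s (rad q) (cen q))"] by (simp add: c_def r'_def)
  ultimately show ?thesis by (simp add: c_def r'_def)
qed

lemma cover_estimate: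
  fixes P :: "(real \<times> (real ^ 'n)) set" and M :: real
  assumes "0 \<le> \<gamma>" "0 < a" "0 < \<kappa>" "\<kappa> \<le> 1" and pattern: "cover_pattern s a \<kappa> c P"
    and bound: "\<And>z \<rho>. 0 < \<rho> \<Longrightarrow> hpball s \<rho> z \<subseteq> B \<Longrightarrow> \<rho> powr \<gamma> * S (hpball s (\<kappa> * \<rho>) z) \<le> M"
    and \<sigma>: "0 < \<sigma>" "hpball s \<sigma> y \<subseteq> B"
  shows "\<sigma> powr \<gamma> * S (hpball s (a * \<sigma>) y) \<le> C (card P) * (card P * M / c powr \<gamma> + \<rho>0 powr \<gamma> * D B)"
proof -
  let ?f = "hp_scale s y \<sigma>" and ?N = "card P"
  let ?ball = "\<lambda>q. hpball s (\<kappa> * (c * \<sigma>)) (?f q)"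
  have c: "0 < c" "finite P" using pattern by (simp_all add: cover_pattern_def)
  have big: "hpball s (c * \<sigma>) (?f q) \<subseteq> B" if "q \<in> P" for q
    using cover_pattern_rescale(1)[OF pattern \<sigma>(1)] assms that by (meson less_imp_le order_trans)
  have small: "0 < \<kappa> * (c * \<sigma>) \<and> ?ball q \<subseteq> B" if "q \<in> P" for q
  proof
    show "0 < \<kappa> * (c * \<sigma>)" using assms c \<sigma> by simp
    then have "?ball q \<subseteq> hpball s (c * \<sigma>) (?f q)"
      using assms c \<sigma> by (intro hpball_mono s_nonneg) (simp_all add: mult_left_le_one_le)
    then show "?ball q \<subseteq> B" using big[OF that] by blast
  qed
  have cover: "hpball s (a * \<sigma>) y \<subseteq> (\<Union>q\<in>P. ?ball q)"
    using cover_pattern_rescale(2)[OF pattern \<sigma>(1)] assms by (simp add: mult.assoc)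
  have "S (hpball s (a * \<sigma>) y) \<le> C ?N * ((\<Sum>q\<in>P. S (?ball q)) + D B)"
  proof (rule S_le_cover_sum[OF c(2) _ _ small cover])
    show "0 < a * \<sigma>" using assms \<sigma> by simp
    show "hpball s (a * \<sigma>) y \<subseteq> B" using cover small by blast
  qed
  then have "\<sigma> powr \<gamma> * S (hpball s (a * \<sigma>) y) \<le> \<sigma> powr \<gamma> * (C ?N * ((\<Sum>q\<in>P. S (?ball q)) + D B))"
    by (rule mult_left_mono) simp
  also have "\<dots> = C ?N * ((\<Sum>q\<in>P. \<sigma> powr \<gamma> * S (?ball q)) + \<sigma> powr \<gamma> * D B)"
    by (simp add: sum_distrib_left algebra_simps)
  also have "\<dots> \<le> C ?N * (?N * (M / c powr \<gamma>) + \<rho>0 powr \<gamma> * D B)"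
  proof (intro mult_left_mono add_mono sum_bounded_above C_nonneg)
    show "\<sigma> powr \<gamma> * D B \<le> \<rho>0 powr \<gamma> * D B"
      using hpball_radius_le[OF \<sigma>] \<sigma> assms D_nonneg by (intro mult_right_mono powr_mono2) auto
    fix q assume "q \<in> P"
    have "(c * \<sigma>) powr \<gamma> * S (?ball q) \<le> M"
      using bound big[OF \<open>q \<in> P\<close>] c \<sigma> by simp
    then show "\<sigma> powr \<gamma> * S (?ball q) \<le> M / c powr \<gamma>"
      using c \<sigma> by (simp add: powr_mult field_simps)
  qed
  finally show ?thesis by simp
qed

end

locale hp_decay = hp_subadditive s \<rho>0 y0 S D C
  for s \<rho>0 and y0 :: "real \<times> (real ^ 'n)" and S D C +
  fixes \<gamma> \<theta>0 \<epsilon> E :: real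
  assumes \<gamma>_nonneg: "0 \<le> \<gamma>" and \<theta>0_pos: "0 < \<theta>0" and \<theta>0_le_1: "\<theta>0 \<le> 1"
    and \<epsilon>_nonneg: "0 \<le> \<epsilon>" and \<epsilon>_le_1: "\<epsilon> \<le> 1" and E_nonneg: "0 \<le> E"
    and decay: "0 < \<sigma> \<Longrightarrow> hpball s \<sigma> y \<subseteq> hpball s \<rho>0 y0 \<Longrightarrow>
      \<sigma> powr \<gamma> * S (hpball s (\<theta>0 * \<sigma>) y) \<le> \<epsilon> * \<sigma> powr \<gamma> * S (hpball s \<sigma> y) + E"
begin

lemma small_ball_bound:
  fixes P :: "(real \<times> (real ^ 'n)) set"
  assumes pattern: "cover_pattern s (1/2) (\<theta>0/2) c P"
    and \<epsilon>_small: "\<epsilon> * (C (card P) * card P / c powr \<gamma>) \<le> 1/2"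
    and \<sigma>: "0 < \<sigma>" "hpball s \<sigma> y \<subseteq> B"
  shows "\<sigma> powr \<gamma> * S (hpball s (\<theta>0/2 * \<sigma>) y) \<le> 2 * (2 powr \<gamma> + C (card P) * \<rho>0 powr \<gamma>) * (E + D B)"
proof -
  let ?N = "card P"
  define adm where "adm = {(z, \<rho>). 0 < \<rho> \<and> hpball s \<rho> z \<subseteq> B}"
  define F where "F = (\<lambda>(z, \<rho>). \<rho> powr \<gamma> * S (hpball s (\<theta>0/2 * \<rho>) z))"
  define M where "M = (SUP p\<in>adm. F p)"
  have inner: "hpball s (\<theta>0/2 * \<rho>) z \<subseteq> hpball s \<rho> z" if "0 < \<rho>" for \<rho> z
    using that \<theta>0_pos \<theta>0_le_1 by (intro hpball_mono s_nonneg) auto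
  have "bdd_above (F ` adm)"
  proof (rule bdd_aboveI2)
    fix p assume "p \<in> adm"
    then obtain z \<rho> where p: "p = (z, \<rho>)" "0 < \<rho>" "hpball s \<rho> z \<subseteq> B"
      by (auto simp: adm_def)
    have "\<rho> powr \<gamma> \<le> \<rho>0 powr \<gamma>"
      using hpball_radius_le[OF p(2,3)] p(2) \<gamma>_nonneg by (intro powr_mono2) auto
    moreover have sub: "hpball s (\<theta>0/2 * \<rho>) z \<subseteq> B"
      using inner[OF p(2), of z] p(3) by blast
    then have "0 \<le> S (hpball s (\<theta>0/2 * \<rho>) z)" "S (hpball s (\<theta>0/2 * \<rho>) z) \<le> S B"
      by (rule S_nonneg, rule S_mono[OF _ order_refl])
    ultimately show "F p \<le> \<rho>0 powr \<gamma> * S B"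
      using p by (auto simp: F_def intro!: mult_mono)
  qed
  then have upper: "\<rho> powr \<gamma> * S (hpball s (\<theta>0/2 * \<rho>) z) \<le> M" if "0 < \<rho>" "hpball s \<rho> z \<subseteq> B" for \<rho> z
    using cSUP_upper[of "(z, \<rho>)" adm F] that by (simp add: M_def adm_def F_def)
  have "0 \<le> M"
    using upper[OF \<rho>0_pos] S_nonneg inner[OF \<rho>0_pos] \<rho>0_pos
    by (meson order_trans order_refl powr_ge_zero zero_le_mult_iff)
  have step: "\<rho> powr \<gamma> * S (hpball s (\<theta>0/2 * \<rho>) z) \<le> M / 2 + (2 powr \<gamma> * E + C ?N * \<rho>0 powr \<gamma> * D B)"
    if "0 < \<rho>" "hpball s \<rho> z \<subseteq> B" for \<rho> z
  proof -
    have half: "hpball s (\<rho>/2) z \<subseteq> B"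
      using that hpball_mono[OF s_nonneg, of "\<rho>/2" \<rho> z] by auto
    have "(\<rho>/2) powr \<gamma> * S (hpball s (\<theta>0/2 * \<rho>) z) \<le> \<epsilon> * (\<rho>/2) powr \<gamma> * S (hpball s (\<rho>/2) z) + E"
      using decay[of "\<rho>/2" z] half that by (simp add: mult.commute)
    then have decay_half: "\<rho> powr \<gamma> * S (hpball s (\<theta>0/2 * \<rho>) z)
        \<le> \<epsilon> * (\<rho> powr \<gamma> * S (hpball s (\<rho>/2) z)) + 2 powr \<gamma> * E"
      using that by (simp add: powr_divide field_simps)
    have "\<rho> powr \<gamma> * S (hpball s (1/2 * \<rho>) z) \<le> C ?N * (?N * M / c powr \<gamma> + \<rho>0 powr \<gamma> * D B)"
      using cover_estimate[OF \<gamma>_nonneg _ _ _ pattern upper that] \<theta>0_pos \<theta>0_le_1 by simp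
    then have "\<epsilon> * (\<rho> powr \<gamma> * S (hpball s (\<rho>/2) z))
        \<le> (\<epsilon> * (C ?N * ?N / c powr \<gamma>)) * M + \<epsilon> * (C ?N * \<rho>0 powr \<gamma> * D B)"
      using \<epsilon>_nonneg mult_left_mono by (fastforce simp: algebra_simps)
    also have "\<dots> \<le> 1/2 * M + 1 * (C ?N * \<rho>0 powr \<gamma> * D B)"
      using \<epsilon>_small \<epsilon>_le_1 \<open>0 \<le> M\<close> C_nonneg D_nonneg by (intro add_mono mult_right_mono) auto
    finally show ?thesis using decay_half by simp
  qed
  have "(SUP p\<in>adm. F p) \<le> M / 2 + (2 powr \<gamma> * E + C ?N * \<rho>0 powr \<gamma> * D B)"
  proof (rule cSUP_least)
    show "adm \<noteq> {}" using \<rho>0_pos unfolding adm_def by blast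
    fix p assume "p \<in> adm"
    then show "F p \<le> M / 2 + (2 powr \<gamma> * E + C ?N * \<rho>0 powr \<gamma> * D B)"
      using step by (auto simp: adm_def F_def)
  qed
  then have "M \<le> 2 * (2 powr \<gamma> * E + C ?N * \<rho>0 powr \<gamma> * D B)"
    unfolding M_def[symmetric] by simp
  also have "\<dots> \<le> 2 * (2 powr \<gamma> + C ?N * \<rho>0 powr \<gamma>) * (E + D B)"
    using E_nonneg D_nonneg C_nonneg[of ?N] by (simp add: algebra_simps)
  finally have "M \<le> 2 * (2 powr \<gamma> + C ?N * \<rho>0 powr \<gamma>) * (E + D B)" .
  then show ?thesis using upper[OF \<sigma>] by linarith
qed

lemma uniform_bound:
  fixes P P' :: "(real \<times> (real ^ 'n)) set"
  assumes pattern: "cover_pattern s (1/2) (\<theta>0/2) c P"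
    and \<epsilon>_small: "\<epsilon> * (C (card P) * card P / c powr \<gamma>) \<le> 1/2"
    and pattern': "cover_pattern s \<theta> (\<theta>0/2) c' P'" and "0 < \<theta>"
    and \<sigma>: "0 < \<sigma>" "hpball s \<sigma> y \<subseteq> B"
  shows "\<sigma> powr \<gamma> * S (hpball s (\<theta> * \<sigma>) y)
    \<le> C (card P') * (card P' * (2 * (2 powr \<gamma> + C (card P) * \<rho>0 powr \<gamma>)) / c' powr \<gamma> + \<rho>0 powr \<gamma>) * (E + D B)"
proof -
  let ?K = "2 * (2 powr \<gamma> + C (card P) * \<rho>0 powr \<gamma>)" and ?N = "card P'"
  have "\<sigma> powr \<gamma> * S (hpball s (\<theta> * \<sigma>) y) \<le> C ?N * (?N * (?K * (E + D B)) / c' powr \<gamma> + \<rho>0 powr \<gamma> * D B)"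
    using cover_estimate[OF \<gamma>_nonneg \<open>0 < \<theta>\<close> _ _ pattern' small_ball_bound[OF pattern \<epsilon>_small] \<sigma>]
      \<theta>0_pos \<theta>0_le_1 by simp
  also have "\<dots> \<le> C ?N * (?N * (?K * (E + D B)) / c' powr \<gamma> + \<rho>0 powr \<gamma> * (E + D B))"
    using E_nonneg C_nonneg[of ?N] by (intro mult_left_mono add_left_mono) simp_all
  finally show ?thesis by (simp add: algebra_simps)
qed

end

theorem lemma3p6:
  fixes s \<theta>0 \<gamma> \<rho>0 :: real and C :: "nat \<Rightarrow> real"
  assumes "0 < s" "s < 1" "0 < \<rho>0"
    and "0 < \<theta>0" "\<theta>0 \<le> 1/2" "0 < \<gamma>"
    and "\<forall>n. 0 < C n"
  shows "\<exists>\<epsilon>. 0 < \<epsilon> \<and> \<epsilon> < 1 \<and>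
    (\<forall>\<theta>. 0 < \<theta> \<and> \<theta> < 1 \<longrightarrow>
      (\<exists>K > 0. \<forall>(y0 :: real \<times> (real ^ 'n)) S D E.
        (let B = hpball s \<rho>0 y0 in
          nonneg_mono_on_convex B S \<and> nonneg_mono_on_convex B D \<and>
          (\<forall>n (c :: nat \<Rightarrow> real \<times> (real ^ 'n)) (r :: nat \<Rightarrow> real).
              (\<forall>i\<le>n. 0 < r i \<and> hpball s (r i) (c i) \<subseteq> B) \<and>
              hpball s (r 0) (c 0) \<subseteq> (\<Union>i\<in>{1..n}. hpball s (r i) (c i)) \<longrightarrow>
              S (hpball s (r 0) (c 0)) \<le> C n * ((\<Sum>i=1..n. S (hpball s (r i) (c i))) + D B)) \<and>
          0 \<le> E \<and>
          (\<forall>y \<sigma>. 0 < \<sigma> \<and> hpball s \<sigma> y \<subseteq> B \<longrightarrow>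
              \<sigma> powr \<gamma> * S (hpball s (\<theta>0 * \<sigma>) y) \<le> \<epsilon> * \<sigma> powr \<gamma> * S (hpball s \<sigma> y) + E)
          \<longrightarrow>
          (\<forall>y \<sigma>. 0 < \<sigma> \<and> hpball s \<sigma> y \<subseteq> B \<longrightarrow>
              \<sigma> powr \<gamma> * S (hpball s (\<theta> * \<sigma>) y) \<le> K * (E + D B)))))"
proof -
  obtain c and P :: "(real \<times> (real ^ 'n)) set" where pattern: "cover_pattern s (1/2) (\<theta>0/2) c P"
    by (rule cover_pattern_exists[of s "1/2" "\<theta>0/2"]) (use assms in auto)
  define L where "L = C (card P) * card P / c powr \<gamma>"
  define \<epsilon> where "\<epsilon> = 1 / (2 * L + 2)"
  have "0 \<le> L" using assms(7) pattern by (simp add: L_def cover_pattern_def less_imp_le)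
  then have \<epsilon>: "0 < \<epsilon>" "\<epsilon> < 1" "\<epsilon> * L \<le> 1/2" by (simp_all add: \<epsilon>_def field_simps)
  show ?thesis
    apply (rule exI[of _ \<epsilon>], intro conjI allI impI \<epsilon>(1,2), elim conjE)
    subgoal premises \<theta> for \<theta>
    proof -
      obtain c' and P' :: "(real \<times> (real ^ 'n)) set" where pattern': "cover_pattern s \<theta> (\<theta>0/2) c' P'"
        by (rule cover_pattern_exists[of s \<theta> "\<theta>0/2"]) (use assms \<theta> in auto)
      let ?K = "C (card P') * (card P' * (2 * (2 powr \<gamma> + C (card P) * \<rho>0 powr \<gamma>)) / c' powr \<gamma> + \<rho>0 powr \<gamma>)"
      have "0 < ?K"
        using assms(3,7) pattern' by (intro mult_pos_pos add_nonneg_pos) (auto simp: cover_pattern_def less_imp_le)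
      show ?thesis
        unfolding Let_def
        apply (intro exI[of _ ?K] conjI allI impI \<open>0 < ?K\<close>, elim conjE)
        subgoal premises hyps for y0 S D E y \<sigma>
        proof -
          interpret hp_decay s \<rho>0 y0 S D C \<gamma> \<theta>0 \<epsilon> E
            by unfold_locales (use hyps assms \<epsilon> in \<open>auto simp: less_imp_le\<close>)
          show ?thesis
            using uniform_bound[OF pattern _ pattern' \<theta>(1) \<open>0 < \<sigma>\<close> \<open>hpball s \<sigma> y \<subseteq> B\<close>] \<epsilon>(3)
            by (simp add: L_def)
        qed
        done
    qed
    done
qed

end
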